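(* Let $D\ge 1$, let $K\ge 0$, let $v\in\mathbb{R}^D$ with $v\neq 0$, and let $\epsilon\in\mathbb{R}^D$. Decompose $\epsilon=\epsilon_\parallel+\epsilon_\perp$, where $\epsilon_\parallel$ is the orthogonal projection of $\epsilon$ onto $\mathrm{span}(v)$ and $\langle \epsilon_\perp, v\rangle=0$. Suppose $\|\epsilon_\perp\|\ge \|v\|$ and $\|\epsilon_\parallel\|\le K\|v\|$. Then $v+\epsilon\neq 0$ and \[ \left\| \frac{v + \epsilon}{\|v + \epsilon\|} - \frac{v}{\|v\|} \right\| \;\geq\; \frac{1}{\sqrt{(1+K)^2+1}} \;>\; 0 . \]
   Context: All norms and inner products are the standard Euclidean ones on $\mathbb{R}^D$. *)

theory Defs
  imports "HOL-Analysis.Analysis"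
begin

end

theory Submission
  imports Defs
begin

text \<open>
  Write \<open>v + \<epsilon> = (1 + c) v + \<epsilon>\<^sub>\<perp>\<close> with \<open>\<bar>c\<bar> \<le> K\<close>. The component of the difference of the two
  unit vectors orthogonal to \<open>v\<close> is \<open>\<epsilon>\<^sub>\<perp> / \<parallel>v + \<epsilon>\<parallel>\<close>, so the distance is at least
  \<open>\<parallel>\<epsilon>\<^sub>\<perp>\<parallel> / \<parallel>v + \<epsilon>\<parallel>\<close>. By Pythagoras and \<open>\<parallel>v\<parallel> \<le> \<parallel>\<epsilon>\<^sub>\<perp>\<parallel>\<close>,
  \<open>\<parallel>v + \<epsilon>\<parallel>\<^sup>2 = (1 + c)\<^sup>2 \<parallel>v\<parallel>\<^sup>2 + \<parallel>\<epsilon>\<^sub>\<perp>\<parallel>\<^sup>2 \<le> ((1 + K)\<^sup>2 + 1) \<parallel>\<epsilon>\<^sub>\<perp>\<parallel>\<^sup>2\<close>.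
\<close>

lemma norm_le_norm_add_orthogonal:
  fixes a b :: "'a::real_inner"
  assumes "orthogonal a b"
  shows "norm b \<le> norm (a + b)"
proof (rule power2_le_imp_le)
  show "(norm b)\<^sup>2 \<le> (norm (a + b))\<^sup>2"
    using norm_add_Pythagorean[OF assms] by simp
qed simp

lemma norm_diff_normalized_ge_orthogonal_part:
  fixes v p :: "'a::real_inner" and a :: real
  assumes "orthogonal v p"
  defines "w \<equiv> a *\<^sub>R v + p"
  shows "norm p / norm w \<le> norm ((1 / norm w) *\<^sub>R w - (1 / norm v) *\<^sub>R v)"
proof -
  have "(1 / norm w) *\<^sub>R w - (1 / norm v) *\<^sub>R v
      = (a / norm w - 1 / norm v) *\<^sub>R v + (1 / norm w) *\<^sub>R p"
    by (simp add: w_def algebra_simps)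
  moreover have "orthogonal ((a / norm w - 1 / norm v) *\<^sub>R v) ((1 / norm w) *\<^sub>R p)"
    using assms by (simp add: orthogonal_clauses)
  ultimately show ?thesis
    using norm_le_norm_add_orthogonal by fastforce
qed

lemma norm_scaleR_add_orthogonal_le:
  fixes v p :: "'a::real_inner"
  assumes "orthogonal v p" and "norm v \<le> norm p" and "\<bar>a\<bar> \<le> L"
  shows "norm (a *\<^sub>R v + p) \<le> sqrt (L\<^sup>2 + 1) * norm p"
proof (rule power2_le_imp_le)
  have "a\<^sup>2 \<le> L\<^sup>2"
    using assms(3) power_mono[of "\<bar>a\<bar>" L 2] by simp
  moreover have "(norm v)\<^sup>2 \<le> (norm p)\<^sup>2"
    using assms(2) by (simp add: power_mono)
  ultimately have "a\<^sup>2 * (norm v)\<^sup>2 \<le> L\<^sup>2 * (norm p)\<^sup>2"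
    by (simp add: mult_mono)
  moreover have "(norm (a *\<^sub>R v + p))\<^sup>2 = a\<^sup>2 * (norm v)\<^sup>2 + (norm p)\<^sup>2"
    using norm_add_Pythagorean[of "a *\<^sub>R v" p] assms(1)
    by (simp add: orthogonal_clauses power_mult_distrib)
  ultimately show "(norm (a *\<^sub>R v + p))\<^sup>2 \<le> (sqrt (L\<^sup>2 + 1) * norm p)\<^sup>2"
    by (simp add: algebra_simps)
qed simp

theorem mainTheorem1:
  fixes v eps :: "'a::euclidean_space" and K :: real
  assumes "K \<ge> 0" and "v \<noteq> 0"
  defines "eps_par \<equiv> ((eps \<bullet> v) / (v \<bullet> v)) *\<^sub>R v"
  defines "eps_perp \<equiv> eps - eps_par"
  assumes "norm eps_perp \<ge> norm v" and "norm eps_par \<le> K * norm v"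
  shows "v + eps \<noteq> 0 \<and>
    norm ((1 / norm (v + eps)) *\<^sub>R (v + eps) - (1 / norm v) *\<^sub>R v) \<ge> 1 / sqrt ((1 + K)^2 + 1)
    \<and> 1 / sqrt ((1 + K)^2 + 1) > 0"
proof -
  define c where "c = (eps \<bullet> v) / (v \<bullet> v)"
  have decomp: "v + eps = (1 + c) *\<^sub>R v + eps_perp"
    by (simp add: eps_perp_def eps_par_def c_def algebra_simps)
  have orth: "orthogonal v eps_perp"
    using vector_sub_project_orthogonal[of v eps]
    by (simp add: orthogonal_def eps_perp_def eps_par_def inner_commute)
  have "\<bar>c\<bar> \<le> K"
    using assms(2,6) by (simp add: eps_par_def flip: c_def)
  then have c_bound: "\<bar>1 + c\<bar> \<le> 1 + K"
    by linarith
  have perp_pos: "norm eps_perp > 0"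
    using assms(2,5) zero_less_norm_iff[of v] by linarith
  have "norm eps_perp \<le> norm (v + eps)"
    unfolding decomp by (rule norm_le_norm_add_orthogonal) (simp add: orth orthogonal_clauses)
  with perp_pos have nonzero: "v + eps \<noteq> 0"
    by auto
  have sqrt_pos: "sqrt ((1 + K)\<^sup>2 + 1) > 0"
    by (simp add: add_nonneg_pos)
  have "norm (v + eps) \<le> sqrt ((1 + K)\<^sup>2 + 1) * norm eps_perp"
    unfolding decomp using norm_scaleR_add_orthogonal_le[OF orth assms(5) c_bound] .
  then have "1 / sqrt ((1 + K)\<^sup>2 + 1) \<le> norm eps_perp / norm (v + eps)"
    using nonzero sqrt_pos by (simp add: field_simps)
  also have "\<dots> \<le> norm ((1 / norm (v + eps)) *\<^sub>R (v + eps) - (1 / norm v) *\<^sub>R v)"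
    unfolding decomp by (rule norm_diff_normalized_ge_orthogonal_part[OF orth])
  finally show ?thesis
    using nonzero sqrt_pos by simp
qed

end
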